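(* Let $\mathcal{H}$ be an infinite-dimensional separable complex Hilbert space, let $A:\mathcal{H}\to\mathcal{H}$ be compact and injective, let $g\in\mathrm{ran}A$, and let $f\in\mathcal{H}$ be the unique vector with $Af=g$. Let $(u_n)_{n\in\mathbb{N}}$ and $(v_n)_{n\in\mathbb{N}}$ be orthonormal bases of $\mathcal{H}$, and let $A_N$, $g_N$ and $\widehat{x}$ be as in the context. Let $(f^{(N)})_{N\in\mathbb{N}}$ be a sequence with $f^{(N)}\in\mathbb{C}^N$ such that, writing $\varepsilon^{(N)}:=A_Nf^{(N)}-g_N\in\mathbb{C}^N$, one has $\|\varepsilon^{(N)}\|_{\mathbb{C}^N}\to0$ as $N\to\infty$. Assume moreover that $\sup_{N}\|\widehat{f^{(N)}}\|_{\mathcal{H}}<\infty$. Then, as $N\to\infty$, \[\|g-A\widehat{f^{(N)}}\|_{\mathcal{H}}\to0\qquad\text{and}\qquad f-\widehat{f^{(N)}}\rightharpoonup0\ \text{(weakly in }\mathcal{H}).\]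
   Context: For orthonormal bases $(u_n)$, $(v_n)$ of $\mathcal{H}$ and $N\in\mathbb{N}$: $A_N$ is the $N\times N$ matrix with entries $(A_N)_{ij}=\langle v_i,Au_j\rangle$ for $i,j\in\{1,\dots,N\}$; $g_N=(\langle v_1,g\rangle,\dots,\langle v_N,g\rangle)\in\mathbb{C}^N$; and for $x=(x_1,\dots,x_N)\in\mathbb{C}^N$, $\widehat{x}:=\sum_{n=1}^Nx_nu_n\in\mathcal{H}$. The inner product is antilinear in the first entry. Weak convergence $\xi_N\rightharpoonup\xi$ means $\langle\eta,\xi_N\rangle\to\langle\eta,\xi\rangle$ for every $\eta\in\mathcal{H}$. *)

theory Defs
  imports "HOL-Analysis.Analysis"
begin

class complex_vector = real_vector +
  fixes scaleC :: "complex \<Rightarrow> 'a \<Rightarrow> 'a" (infixr \<open>*\<^sub>C\<close> 75)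
  assumes scaleC_add_right: "a *\<^sub>C (x + y) = a *\<^sub>C x + a *\<^sub>C y"
    and scaleC_add_left: "(a + b) *\<^sub>C x = a *\<^sub>C x + b *\<^sub>C x"
    and scaleC_scaleC: "a *\<^sub>C (b *\<^sub>C x) = (a * b) *\<^sub>C x"
    and scaleC_one: "1 *\<^sub>C x = x"
    and scaleR_scaleC: "r *\<^sub>R x = complex_of_real r *\<^sub>C x"

text \<open>Inner product antilinear in the first argument, linear in the second;
  the norm is the one induced by the inner product.\<close>
class complex_inner = complex_vector + real_normed_vector +
  fixes cinner :: "'a \<Rightarrow> 'a \<Rightarrow> complex"
  assumes cinner_commute: "cinner x y = cnj (cinner y x)"
    and cinner_add_right: "cinner x (y + z) = cinner x y + cinner x z"
    and cinner_scaleC_right: "cinner x (r *\<^sub>C y) = r * cinner x y"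
    and cinner_ge_zero: "0 \<le> Re (cinner x x)"
    and cinner_eq_zero_iff: "cinner x x = 0 \<longleftrightarrow> x = 0"
    and norm_eq_sqrt_cinner: "norm x = sqrt (Re (cinner x x))"

class complex_hilbert = complex_inner + complete_space

definition clinear :: "('a::complex_vector \<Rightarrow> 'b::complex_vector) \<Rightarrow> bool" where
  "clinear T \<longleftrightarrow> (\<forall>x y. T (x + y) = T x + T y) \<and> (\<forall>c x. T (c *\<^sub>C x) = c *\<^sub>C T x)"

definition compact_op :: "('a::complex_inner \<Rightarrow> 'b::complex_inner) \<Rightarrow> bool" where
  "compact_op T \<longleftrightarrow> clinear T \<and> compact (closure (T ` cball 0 1))"

definition cspan :: "'a::complex_vector set \<Rightarrow> 'a set" where
  "cspan S = {\<Sum>x\<in>F. c x *\<^sub>C x | F c. finite F \<and> F \<subseteq> S}"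

definition orthonormal_basis :: "'i set \<Rightarrow> ('i \<Rightarrow> 'a::complex_inner) \<Rightarrow> bool" where
  "orthonormal_basis I u \<longleftrightarrow>
     (\<forall>i\<in>I. \<forall>j\<in>I. cinner (u i) (u j) = (if i = j then 1 else 0)) \<and>
     closure (cspan (u ` I)) = UNIV"

text \<open>Section matrix, data vector and synthesis map; vectors in C^N are functions
  on nat of which the entries 1..N are used.\<close>
definition sec_mat :: "('a::complex_inner \<Rightarrow> 'a) \<Rightarrow> (nat \<Rightarrow> 'a) \<Rightarrow> (nat \<Rightarrow> 'a) \<Rightarrow> nat \<Rightarrow> nat \<Rightarrow> complex" where
  "sec_mat A u v i j = cinner (v i) (A (u j))"

definition mat_app :: "nat \<Rightarrow> (nat \<Rightarrow> nat \<Rightarrow> complex) \<Rightarrow> (nat \<Rightarrow> complex) \<Rightarrow> (nat \<Rightarrow> complex)" where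
  "mat_app N M x = (\<lambda>i. \<Sum>j=1..N. M i j * x j)"

definition sec_vec :: "(nat \<Rightarrow> 'a::complex_inner) \<Rightarrow> 'a \<Rightarrow> nat \<Rightarrow> complex" where
  "sec_vec v g = (\<lambda>i. cinner (v i) g)"

definition synth :: "nat \<Rightarrow> (nat \<Rightarrow> 'a::complex_vector) \<Rightarrow> (nat \<Rightarrow> complex) \<Rightarrow> 'a" where
  "synth N u x = (\<Sum>n=1..N. x n *\<^sub>C u n)"

definition normCN :: "nat \<Rightarrow> (nat \<Rightarrow> complex) \<Rightarrow> real" where
  "normCN N x = sqrt (\<Sum>i=1..N. (cmod (x i))\<^sup>2)"

end

theory Submission
  imports Defs
begin

(* Put w_N = (synthesised approximation) - f.  This is a bounded sequence, and the entries of the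
   residual are exactly the coefficients <v_i, A w_N>, so A w_N converges weakly to 0.
   Every subsequence of (w_N) has a further weakly convergent subsequence (compactness of a product
   of discs plus Riesz-Fischer); bounded operators are weakly continuous, so its limit z has
   A z = 0, hence z = 0 by injectivity.  Thus w_N converges weakly to 0, and a compact operator
   maps it to a norm-null sequence. *)

lemma LIMSEQ_subseq_subseqI:
  fixes X :: "nat \<Rightarrow> 'a::metric_space"
  assumes "\<And>r::nat \<Rightarrow> nat. strict_mono r \<Longrightarrow>
    \<exists>s::nat \<Rightarrow> nat. strict_mono s \<and> (\<lambda>k. X (r (s k))) \<longlonglongrightarrow> L"
  shows "X \<longlonglongrightarrow> L"
proof (rule ccontr)
  assume "\<not> X \<longlonglongrightarrow> L"
  then obtain e where e: "0 < e" and far: "\<not> eventually (\<lambda>n. dist (X n) L < e) sequentially"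
    unfolding tendsto_iff by blast
  obtain r :: "nat \<Rightarrow> nat" where r: "strict_mono r" "\<And>n. \<not> dist (X (r n)) L < e"
    using not_eventually_sequentiallyD[OF far] by blast
  obtain s where "(\<lambda>k. X (r (s k))) \<longlonglongrightarrow> L"
    using assms[OF r(1)] by blast
  then have "eventually (\<lambda>k. dist (X (r (s k))) L < e) sequentially"
    using e by (rule tendstoD)
  then show False
    using r(2) by (auto simp: eventually_sequentially)
qed

lemma coordinatewise_convergent_subseq:
  fixes c :: "nat \<Rightarrow> nat \<Rightarrow> complex"
  assumes "\<And>k j. cmod (c k j) \<le> B"
  obtains r d where "strict_mono r" "\<And>j. (\<lambda>k. c (r k) j) \<longlonglongrightarrow> d j"
proof -
  have "compact (PiE UNIV (\<lambda>_::nat. cball (0::complex) B))"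
    using compactin_PiE[of "\<lambda>_. euclidean" UNIV "\<lambda>_::nat. cball (0::complex) B"]
    by (simp add: euclidean_product_topology)
  moreover have "\<forall>k. c k \<in> PiE UNIV (\<lambda>_::nat. cball (0::complex) B)"
    using assms by auto
  ultimately obtain l r where r: "strict_mono r" and lim: "(c \<circ> r) \<longlonglongrightarrow> l"
    using seq_compactE[OF compact_imp_seq_compact] by metis
  have "(\<lambda>k. c (r k) j) \<longlonglongrightarrow> l j" for j
  proof -
    have "isCont (\<lambda>x::nat\<Rightarrow>complex. x j) l"
      using continuous_on_eq_continuous_at[OF open_UNIV, of "\<lambda>x::nat\<Rightarrow>complex. x j"] by simp
    from isCont_tendsto_compose[OF this lim] show ?thesis by (simp add: o_def)
  qed
  with r show ?thesis by (rule that)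
qed

section \<open>Complex inner product spaces\<close>

lemma scaleC_zero_left [simp]: "0 *\<^sub>C (x::'a::complex_vector) = 0"
  using scaleR_scaleC[of 0 x] by simp

lemma cinner_add_left: "cinner (x + y) (z::'a::complex_inner) = cinner x z + cinner y z"
  by (subst cinner_commute, subst (2) cinner_commute, subst (3) cinner_commute)
    (simp add: cinner_add_right)

lemma cinner_scaleC_left: "cinner (r *\<^sub>C x) (y::'a::complex_inner) = cnj r * cinner x y"
  by (subst cinner_commute, subst (2) cinner_commute) (simp add: cinner_scaleC_right)

lemma cinner_zero_right [simp]: "cinner x (0::'a::complex_inner) = 0"
  using cinner_add_right[of x 0 0] by simp

lemma cinner_zero_left [simp]: "cinner (0::'a::complex_inner) x = 0"
  by (subst cinner_commute) simp

lemma cinner_minus_right: "cinner x (- y::'a::complex_inner) = - cinner x y"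
  using cinner_add_right[of x y "-y"] by (simp add: eq_neg_iff_add_eq_0 add.commute)

lemma cinner_diff_right: "cinner x (y - z::'a::complex_inner) = cinner x y - cinner x z"
  using cinner_add_right[of x y "-z"] by (simp add: cinner_minus_right)

lemma cinner_minus_left: "cinner (- x::'a::complex_inner) y = - cinner x y"
  by (subst cinner_commute, subst (2) cinner_commute) (simp add: cinner_minus_right)

lemma cinner_diff_left: "cinner (x - y::'a::complex_inner) z = cinner x z - cinner y z"
  using cinner_add_left[of x "-y" z] by (simp add: cinner_minus_left)

lemma cinner_sum_right: "cinner x (\<Sum>i\<in>F. f i::'a::complex_inner) = (\<Sum>i\<in>F. cinner x (f i))"
  by (induction F rule: infinite_finite_induct) (auto simp: cinner_add_right)

lemma cinner_sum_left: "cinner (\<Sum>i\<in>F. f i::'a::complex_inner) x = (\<Sum>i\<in>F. cinner (f i) x)"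
  by (induction F rule: infinite_finite_induct) (auto simp: cinner_add_left)

lemma cinner_scaleR_right: "cinner x (r *\<^sub>R y::'a::complex_inner) = r *\<^sub>R cinner x y"
  by (simp add: scaleR_scaleC cinner_scaleC_right scaleR_conv_of_real)

lemma cinner_scaleR_left: "cinner (r *\<^sub>R x::'a::complex_inner) y = r *\<^sub>R cinner x y"
  by (simp add: scaleR_scaleC cinner_scaleC_left scaleR_conv_of_real)

lemma cinner_self: "cinner x (x::'a::complex_inner) = complex_of_real ((norm x)\<^sup>2)"
proof -
  have "Im (cinner x x) = 0"
    using arg_cong[OF cinner_commute[of x x], of Im] by simp
  then show ?thesis
    using cinner_ge_zero[of x] norm_eq_sqrt_cinner[of x] by (simp add: complex_eq_iff)
qed

lemma Re_cinner_self: "Re (cinner x (x::'a::complex_inner)) = (norm x)\<^sup>2"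
  by (simp add: cinner_self)

lemma Re_cnj_mult_self: "Re (cnj z * z) = (cmod z)\<^sup>2"
  unfolding cmod_power2 by (simp add: power2_eq_square)

lemma cmod_cinner_le: "cmod (cinner x (y::'a::complex_inner)) \<le> norm x * norm y"
proof (cases "y = 0")
  case True
  then show ?thesis by simp
next
  case False
  define t where "t = cinner y x / cinner y y"
  have ny: "norm y > 0"
    using False by simp
  have yy: "cinner y y \<noteq> 0"
    using False cinner_eq_zero_iff by blast
  have expand: "cinner (x - t *\<^sub>C y) (x - t *\<^sub>C y)
      = cinner x x - t * cinner x y - cnj t * cinner y x + cnj t * (t * cinner y y)"
    by (simp add: cinner_diff_left cinner_diff_right cinner_scaleC_left cinner_scaleC_right
        algebra_simps)
  have t_yy: "t * cinner y y = cinner y x"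
    using yy by (simp add: t_def)
  have "t * cinner x y = (cnj (cinner x y) * cinner x y) / cinner y y"
    by (simp add: t_def cinner_commute[of y x])
  also have "cnj (cinner x y) * cinner x y = of_real ((cmod (cinner x y))\<^sup>2)"
    by (simp only: complex_norm_square mult.commute)
  finally have t_xy: "t * cinner x y = of_real ((cmod (cinner x y))\<^sup>2 / (norm y)\<^sup>2)"
    by (simp add: cinner_self)
  \<comment> \<open>orthogonal projection: \<open>x - t y\<close> is perpendicular to \<open>y\<close>\<close>
  have "0 \<le> Re (cinner (x - t *\<^sub>C y) (x - t *\<^sub>C y))"
    by (rule cinner_ge_zero)
  also have "\<dots> = Re (cinner x x) - Re (t * cinner x y)"
    unfolding expand t_yy by simp
  finally have "(cmod (cinner x y))\<^sup>2 / (norm y)\<^sup>2 \<le> (norm x)\<^sup>2"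
    unfolding t_xy Re_cinner_self by simp
  then have "(cmod (cinner x y))\<^sup>2 \<le> (norm x * norm y)\<^sup>2"
    using ny by (simp add: divide_le_eq power_mult_distrib)
  then show ?thesis
    by (rule power2_le_imp_le) simp
qed

lemma bounded_bilinear_cinner: "bounded_bilinear (cinner :: 'a::complex_inner \<Rightarrow> 'a \<Rightarrow> complex)"
  by unfold_locales
    (auto simp: cinner_add_left cinner_add_right cinner_scaleR_left cinner_scaleR_right
      intro!: exI[of _ 1] cmod_cinner_le)

lemma tendsto_cinner [tendsto_intros]:
  "(f \<longlongrightarrow> a) F \<Longrightarrow> (g \<longlongrightarrow> b) F \<Longrightarrow>
    ((\<lambda>x. cinner (f x) (g x::'a::complex_inner)) \<longlongrightarrow> cinner a b) F"
  by (rule bounded_bilinear.tendsto[OF bounded_bilinear_cinner])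

lemma continuous_on_cinner [continuous_intros]:
  "continuous_on S f \<Longrightarrow> continuous_on S g \<Longrightarrow>
    continuous_on S (\<lambda>x. cinner (f x) (g x::'a::complex_inner))"
  by (rule bounded_bilinear.continuous_on[OF bounded_bilinear_cinner])

lemma clinear_add: "clinear A \<Longrightarrow> A (x + y) = A x + A y"
  by (simp add: clinear_def)

lemma clinear_scaleC: "clinear A \<Longrightarrow> A (c *\<^sub>C x) = c *\<^sub>C A x"
  by (simp add: clinear_def)

lemma clinear_zero: "clinear A \<Longrightarrow> A 0 = 0"
  using clinear_scaleC[of A 0 0] by simp

lemma clinear_scaleR: "clinear A \<Longrightarrow> A (r *\<^sub>R x) = r *\<^sub>R A x"
  by (simp add: scaleR_scaleC clinear_scaleC)

lemma clinear_diff: "clinear A \<Longrightarrow> A (x - y) = A x - A y"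
  using clinear_add[of A x "-y"] clinear_scaleR[of A "-1" y] by simp

lemma clinear_sum: "clinear A \<Longrightarrow> A (\<Sum>j\<in>F. f j) = (\<Sum>j\<in>F. A (f j))"
  by (induction F rule: infinite_finite_induct) (auto simp: clinear_zero clinear_add)

lemma compact_op_bounded:
  fixes A :: "'a::complex_inner \<Rightarrow> 'b::complex_inner"
  assumes "compact_op A"
  obtains C where "0 \<le> C" "\<And>x. norm (A x) \<le> C * norm x"
proof -
  have lin: "clinear A" and cpt: "compact (closure (A ` cball 0 1))"
    using assms by (auto simp: compact_op_def)
  obtain C where C: "\<And>y. y \<in> closure (A ` cball 0 1) \<Longrightarrow> norm y \<le> C"
    using compact_imp_bounded[OF cpt] unfolding bounded_iff by blast
  have image_ball: "A x \<in> closure (A ` cball 0 1)" if "norm x \<le> 1" for x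
    using that by (intro subsetD[OF closure_subset] imageI) simp
  have "norm (A 0) \<le> C"
    by (rule C[OF image_ball]) simp
  then have "0 \<le> C"
    using norm_ge_zero[of "A 0"] by linarith
  moreover have "norm (A x) \<le> C * norm x" for x
  proof (cases "x = 0")
    case True
    then show ?thesis by (simp add: clinear_zero[OF lin])
  next
    case False
    define x1 where "x1 = (1 / norm x) *\<^sub>R x"
    have "A x = norm x *\<^sub>R A x1"
      using False clinear_scaleR[OF lin, of "norm x" x1] by (simp add: x1_def)
    then have "norm (A x) = norm x * norm (A x1)"
      by simp
    also have "\<dots> \<le> norm x * C"
      using False C[OF image_ball[of x1]] by (intro mult_left_mono) (simp_all add: x1_def)
    finally show ?thesis
      by (simp only: mult.commute)
  qed
  ultimately show ?thesis
    by (rule that)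
qed

definition clinear_functional :: "('a::complex_vector \<Rightarrow> complex) \<Rightarrow> bool" where
  "clinear_functional \<phi> \<longleftrightarrow>
     (\<forall>x y. \<phi> (x + y) = \<phi> x + \<phi> y) \<and> (\<forall>c x. \<phi> (c *\<^sub>C x) = c * \<phi> x)"

lemma clinear_functional_sum:
  assumes "clinear_functional \<phi>"
  shows "\<phi> (\<Sum>j\<in>F. a j *\<^sub>C v j) = (\<Sum>j\<in>F. a j * \<phi> (v j))"
proof -
  have "\<phi> (0 *\<^sub>C 0) = 0 * \<phi> 0"
    using assms unfolding clinear_functional_def by blast
  then have "\<phi> 0 = 0"
    by simp
  then show ?thesis
    using assms by (induction F rule: infinite_finite_induct) (auto simp: clinear_functional_def)
qed

lemma clinear_functional_cinner_clinear:
  "clinear A \<Longrightarrow> clinear_functional (\<lambda>x. cinner \<eta> (A x))"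
  by (simp add: clinear_functional_def clinear_add clinear_scaleC cinner_add_right
      cinner_scaleC_right)

section \<open>Orthonormal bases\<close>

lemma orthonormal_basis_cinner:
  "orthonormal_basis {1..} u \<Longrightarrow> 1 \<le> i \<Longrightarrow> 1 \<le> j \<Longrightarrow>
    cinner (u i) (u j :: 'a::complex_inner) = (if i = j then 1 else 0)"
  by (simp add: orthonormal_basis_def)

lemma orthonormal_basis_norm:
  assumes "orthonormal_basis {1..} u" "1 \<le> i"
  shows "norm (u i :: 'a::complex_inner) = 1"
proof -
  have "(norm (u i))\<^sup>2 = 1"
    using orthonormal_basis_cinner[OF assms(1,2,2)] Re_cinner_self[of "u i"] by simp
  then show ?thesis
    by (simp add: power2_eq_1_iff) (smt (verit) norm_ge_zero)
qed

lemma cspanE: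
  assumes "x \<in> cspan S"
  obtains F c where "finite F" "F \<subseteq> S" "x = (\<Sum>y\<in>F. c y *\<^sub>C y)"
  using assms by (auto simp: cspan_def)

lemma orthonormal_basis_continuous_eq:
  fixes f g :: "'a::complex_inner \<Rightarrow> 'b::t2_space"
  assumes "orthonormal_basis {1..} u" "continuous_on UNIV f" "continuous_on UNIV g"
    and "\<And>x. x \<in> cspan (u ` {1..}) \<Longrightarrow> f x = g x"
  shows "f x = g x"
proof -
  have "closure (cspan (u ` {1..})) \<subseteq> {x. f x = g x}"
    by (rule closure_minimal) (use assms in \<open>auto intro: closed_Collect_eq\<close>)
  then show ?thesis
    using assms(1) by (auto simp: orthonormal_basis_def)
qed

lemma orthonormal_basis_cinner_sum:
  assumes "orthonormal_basis {1..} u" "finite F" "F \<subseteq> {1..}" "1 \<le> i"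
  shows "cinner (u i) (\<Sum>j\<in>F. c j *\<^sub>C u j :: 'a::complex_inner) = (if i \<in> F then c i else 0)"
proof -
  have "cinner (u i) (\<Sum>j\<in>F. c j *\<^sub>C u j) = (\<Sum>j\<in>F. if j = i then c j else 0)"
    unfolding cinner_sum_right
  proof (rule sum.cong)
    fix j
    assume "j \<in> F"
    then show "cinner (u i) (c j *\<^sub>C u j) = (if j = i then c j else 0)"
      using assms(3) orthonormal_basis_cinner[OF assms(1,4)] by (auto simp: cinner_scaleC_right)
  qed simp
  then show ?thesis
    using assms(2) by (simp add: sum.delta)
qed

lemma orthonormal_basis_norm_sum:
  assumes "orthonormal_basis {1..} u" "finite F" "F \<subseteq> {1..}"
  shows "(norm (\<Sum>j\<in>F. c j *\<^sub>C u j :: 'a::complex_inner))\<^sup>2 = (\<Sum>j\<in>F. (cmod (c j))\<^sup>2)"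
proof -
  have "cinner (\<Sum>j\<in>F. c j *\<^sub>C u j) (\<Sum>j\<in>F. c j *\<^sub>C u j)
      = (\<Sum>i\<in>F. cnj (c i) * cinner (u i) (\<Sum>j\<in>F. c j *\<^sub>C u j))"
    by (simp add: cinner_sum_left cinner_scaleC_left)
  also have "\<dots> = (\<Sum>i\<in>F. cnj (c i) * c i)"
    using assms orthonormal_basis_cinner_sum[OF assms] by (intro sum.cong) auto
  finally have expand: "cinner (\<Sum>j\<in>F. c j *\<^sub>C u j) (\<Sum>j\<in>F. c j *\<^sub>C u j)
      = (\<Sum>i\<in>F. cnj (c i) * c i)" .
  show ?thesis
    unfolding Re_cinner_self[symmetric] expand Re_sum Re_cnj_mult_self ..
qed

lemma Bessel_inequality:
  assumes "orthonormal_basis {1..} u" "finite F" "F \<subseteq> {1..}"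
  shows "(\<Sum>j\<in>F. (cmod (cinner (u j) x))\<^sup>2) \<le> (norm (x::'a::complex_inner))\<^sup>2"
proof -
  define p where "p = (\<Sum>j\<in>F. cinner (u j) x *\<^sub>C u j)"
  define S where "S = (\<Sum>j\<in>F. (cmod (cinner (u j) x))\<^sup>2)"
  have px: "Re (cinner p x) = S"
    unfolding p_def S_def cinner_sum_left cinner_scaleC_left Re_sum Re_cnj_mult_self ..
  then have xp: "Re (cinner x p) = S"
    by (subst cinner_commute) simp
  have pp: "Re (cinner p p) = S"
    unfolding Re_cinner_self p_def S_def by (rule orthonormal_basis_norm_sum[OF assms])
  have "0 \<le> Re (cinner (x - p) (x - p))"
    by (rule cinner_ge_zero)
  also have "\<dots> = Re (cinner x x) - Re (cinner x p) - Re (cinner p x) + Re (cinner p p)"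
    by (simp add: cinner_diff_left cinner_diff_right)
  finally show ?thesis
    using px xp pp by (simp add: Re_cinner_self S_def)
qed

lemma orthonormal_basis_partial_sums_Cauchy:
  assumes onb: "orthonormal_basis {1..} u" and bnd: "\<And>M. (\<Sum>j=1..M. (cmod (c j))\<^sup>2) \<le> K"
  shows "Cauchy (\<lambda>M. \<Sum>j=1..M. c j *\<^sub>C u j :: 'a::complex_inner)"
proof -
  define s where "s M = (\<Sum>j=1..M. c j *\<^sub>C u j)" for M
  define S where "S M = (\<Sum>j=1..M. (cmod (c j))\<^sup>2)" for M
  have "incseq S"
    unfolding incseq_def S_def by (auto intro!: sum_mono2)
  then have "S \<longlonglongrightarrow> (SUP M. S M)"
    using bnd by (intro LIMSEQ_incseq_SUP) (auto simp: bdd_above_def S_def)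
  then have CS: "Cauchy S"
    by (rule LIMSEQ_imp_Cauchy)
  have diff: "(norm (s n - s m))\<^sup>2 = \<bar>S n - S m\<bar>" if "m \<le> n" for m n
  proof -
    have "s n - s m = (\<Sum>j\<in>{1..n} - {1..m}. c j *\<^sub>C u j)"
      "S n - S m = (\<Sum>j\<in>{1..n} - {1..m}. (cmod (c j))\<^sup>2)"
      unfolding s_def S_def using that by (auto intro!: sum_diff[symmetric])
    moreover have "0 \<le> S n - S m"
      using \<open>incseq S\<close> that by (simp add: incseq_def)
    moreover have "{1..n} - {1..m} \<subseteq> {1..}"
      by auto
    ultimately show ?thesis
      using orthonormal_basis_norm_sum[OF onb, of "{1..n} - {1..m}" c] by simp
  qed
  show ?thesis
    unfolding s_def[symmetric]
  proof (rule metric_CauchyI)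
    fix e :: real
    assume e: "0 < e"
    then obtain N where N: "\<And>m n. N \<le> m \<Longrightarrow> N \<le> n \<Longrightarrow> dist (S m) (S n) < e\<^sup>2"
      using metric_CauchyD[OF CS, of "e\<^sup>2"] by auto
    have "dist (s m) (s n) < e" if "N \<le> m" "N \<le> n" for m n
    proof -
      have "(norm (s m - s n))\<^sup>2 = \<bar>S m - S n\<bar>"
        using diff[of m n] diff[of n m] by (cases "m \<le> n") (auto simp: norm_minus_commute)
      also have "\<dots> < e\<^sup>2"
        using N[OF that] by (simp add: dist_real_def)
      finally show ?thesis
        using e by (simp add: dist_norm power_less_imp_less_base)
    qed
    then show "\<exists>M. \<forall>m\<ge>M. \<forall>n\<ge>M. dist (s m) (s n) < e"
      by blast
  qed
qed

lemma orthonormal_basis_Riesz_Fischer: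
  fixes u :: "nat \<Rightarrow> 'a::complex_hilbert"
  assumes onb: "orthonormal_basis {1..} u" and bnd: "\<And>M. (\<Sum>j=1..M. (cmod (c j))\<^sup>2) \<le> K"
  obtains w where "\<And>i. 1 \<le> i \<Longrightarrow> cinner (u i) w = c i"
proof -
  define s where "s M = (\<Sum>j=1..M. c j *\<^sub>C u j)" for M
  obtain w where w: "s \<longlonglongrightarrow> w"
    using orthonormal_basis_partial_sums_Cauchy[OF onb bnd] Cauchy_convergent convergent_def
    unfolding s_def by blast
  have "cinner (u i) w = c i" if "1 \<le> i" for i
  proof -
    have "eventually (\<lambda>M. cinner (u i) (s M) = c i) sequentially"
      unfolding eventually_sequentially
      using that by (auto simp: s_def orthonormal_basis_cinner_sum[OF onb] intro!: exI[of _ i])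
    then have "(\<lambda>M. cinner (u i) (s M)) \<longlonglongrightarrow> c i"
      by (rule tendsto_eventually)
    moreover have "(\<lambda>M. cinner (u i) (s M)) \<longlonglongrightarrow> cinner (u i) w"
      by (intro tendsto_intros w)
    ultimately show ?thesis
      using LIMSEQ_unique by blast
  qed
  then show ?thesis by (rule that)
qed

lemma bounded_functional_coefficients_le:
  fixes \<phi> :: "'a::complex_inner \<Rightarrow> complex" and u :: "nat \<Rightarrow> 'a"
  assumes onb: "orthonormal_basis {1..} u" and lin: "clinear_functional \<phi>"
    and bnd: "\<And>x. cmod (\<phi> x) \<le> C * norm x"
  shows "(\<Sum>j=1..M. (cmod (\<phi> (u j)))\<^sup>2) \<le> C\<^sup>2"
proof -
  define y where "y = (\<Sum>j=1..M. cnj (\<phi> (u j)) *\<^sub>C u j)"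
  define S where "S = (\<Sum>j=1..M. (cmod (\<phi> (u j)))\<^sup>2)"
  have S0: "0 \<le> S"
    unfolding S_def by (simp add: sum_nonneg)
  have "\<phi> y = (\<Sum>j=1..M. cnj (\<phi> (u j)) * \<phi> (u j))"
    unfolding y_def by (rule clinear_functional_sum[OF lin])
  also have "\<dots> = complex_of_real S"
    unfolding S_def of_real_sum by (intro sum.cong refl) (simp only: complex_norm_square mult.commute)
  finally have "\<phi> y = complex_of_real S" .
  then have "S \<le> C * norm y"
    using bnd[of y] S0 by simp
  moreover have "(norm y)\<^sup>2 = S"
    using orthonormal_basis_norm_sum[OF onb, of "{1..M}"] by (simp add: y_def S_def)
  then have "norm y = sqrt S"
    by (intro real_sqrt_unique[symmetric]) simp_all
  ultimately have "S \<le> C * sqrt S"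
    by simp
  then have "sqrt S * sqrt S \<le> C * sqrt S"
    using S0 by (simp add: real_sqrt_mult_self)
  have "S \<le> C\<^sup>2"
  proof (cases "S = 0")
    case True
    then show ?thesis by simp
  next
    case False
    with S0 have "0 < sqrt S"
      by simp
    with \<open>sqrt S * sqrt S \<le> C * sqrt S\<close> have "sqrt S \<le> C"
      by (rule mult_right_le_imp_le)
    then show ?thesis
      using S0 power_mono[of "sqrt S" C 2] by simp
  qed
  then show ?thesis
    by (simp add: S_def)
qed

lemma Riesz_representation:
  fixes \<phi> :: "'a::complex_hilbert \<Rightarrow> complex" and u :: "nat \<Rightarrow> 'a"
  assumes onb: "orthonormal_basis {1..} u" and lin: "clinear_functional \<phi>"
    and bnd: "\<And>x. cmod (\<phi> x) \<le> C * norm x"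
  obtains z where "\<And>x. \<phi> x = cinner z x"
proof -
  have "(\<Sum>j=1..M. (cmod (cnj (\<phi> (u j))))\<^sup>2) \<le> C\<^sup>2" for M
    using bounded_functional_coefficients_le[OF assms] by simp
  then obtain z where z: "\<And>i. 1 \<le> i \<Longrightarrow> cinner (u i) z = cnj (\<phi> (u i))"
    by (rule orthonormal_basis_Riesz_Fischer[OF onb]) blast
  have "bounded_linear \<phi>"
  proof (rule bounded_linear_intro[where K = C])
    show "\<phi> (x + y) = \<phi> x + \<phi> y" "\<phi> (r *\<^sub>R x) = r *\<^sub>R \<phi> x" for x y r
      using lin by (simp_all add: clinear_functional_def scaleR_scaleC scaleR_conv_of_real)
    show "norm (\<phi> x) \<le> norm x * C" for x
      using bnd[of x] by (simp add: mult.commute)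
  qed
  have "\<phi> x = cinner z x" for x
  proof (rule orthonormal_basis_continuous_eq[OF onb])
    show "continuous_on UNIV \<phi>"
      by (rule linear_continuous_on[OF \<open>bounded_linear \<phi>\<close>])
    show "continuous_on UNIV (cinner z)"
      by (intro continuous_intros)
    fix x
    assume "x \<in> cspan (u ` {1..})"
    then obtain F c where F: "finite F" "F \<subseteq> u ` {1..}" "x = (\<Sum>y\<in>F. c y *\<^sub>C y)"
      by (rule cspanE)
    have "\<phi> y = cinner z y" if y: "y \<in> F" for y
    proof -
      obtain i where i: "1 \<le> i" "y = u i"
        using F(2) y by auto
      have "cinner z y = cnj (cinner y z)"
        by (rule cinner_commute)
      then show ?thesis
        using z[OF i(1)] i(2) by simp
    qed
    then show "\<phi> x = cinner z x"
      using F(3) clinear_functional_sum[OF lin, of c "\<lambda>y. y" F]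
      by (simp add: cinner_sum_right cinner_scaleC_right)
  qed
  then show ?thesis by (rule that)
qed

section \<open>Weak convergence\<close>

definition weakly_tendsto :: "(nat \<Rightarrow> 'a::complex_inner) \<Rightarrow> 'a \<Rightarrow> bool" where
  "weakly_tendsto X L \<longleftrightarrow> (\<forall>\<eta>. (\<lambda>k. cinner \<eta> (X k)) \<longlonglongrightarrow> cinner \<eta> L)"

lemma tendsto_imp_weakly_tendsto:
  assumes "X \<longlonglongrightarrow> L"
  shows "weakly_tendsto X L"
  unfolding weakly_tendsto_def
proof
  fix \<eta>
  show "(\<lambda>k. cinner \<eta> (X k)) \<longlonglongrightarrow> cinner \<eta> L"
    by (rule tendsto_cinner[OF tendsto_const assms])
qed

lemma weakly_tendsto_subseq:
  assumes "weakly_tendsto X L" "strict_mono r"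
  shows "weakly_tendsto (\<lambda>k. X (r k)) L"
  unfolding weakly_tendsto_def
proof
  fix \<eta>
  have "(\<lambda>k. cinner \<eta> (X k)) \<longlonglongrightarrow> cinner \<eta> L"
    using assms(1) by (simp add: weakly_tendsto_def)
  from LIMSEQ_subseq_LIMSEQ[OF this assms(2)]
  show "(\<lambda>k. cinner \<eta> (X (r k))) \<longlonglongrightarrow> cinner \<eta> L"
    by (simp add: o_def)
qed

lemma weakly_tendsto_unique:
  assumes "weakly_tendsto X L" "weakly_tendsto X L'"
  shows "L = L'"
proof -
  have "(\<lambda>k. cinner (L - L') (X k)) \<longlonglongrightarrow> cinner (L - L') L"
    and "(\<lambda>k. cinner (L - L') (X k)) \<longlonglongrightarrow> cinner (L - L') L'"
    using assms unfolding weakly_tendsto_def by blast+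
  then have "cinner (L - L') L = cinner (L - L') L'"
    by (rule LIMSEQ_unique)
  then have "cinner (L - L') (L - L') = 0"
    by (simp add: cinner_diff_right)
  then show ?thesis
    by (simp add: cinner_eq_zero_iff)
qed

lemma tendsto_cinner_from_dense:
  fixes X :: "nat \<Rightarrow> 'a::complex_inner"
  assumes dense: "closure D = UNIV" and bnd: "\<And>k. norm (X k) \<le> B"
    and on_D: "\<And>z. z \<in> D \<Longrightarrow> (\<lambda>k. cinner z (X k)) \<longlonglongrightarrow> cinner z L"
  shows "(\<lambda>k. cinner x (X k)) \<longlonglongrightarrow> cinner x L"
  unfolding LIMSEQ_iff
proof (intro allI impI)
  fix r :: real
  assume r: "0 < r"
  define R where "R = \<bar>B\<bar> + norm L + 1"
  have R: "0 < R"
    using norm_ge_zero[of L] abs_ge_zero[of B] unfolding R_def by linarith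
  have XL: "norm (X n - L) \<le> R" for n
    using bnd[of n] norm_triangle_ineq4[of "X n" L] abs_ge_self[of B] unfolding R_def by linarith
  have "x \<in> closure D"
    using dense by simp
  then obtain z where z: "z \<in> D" "dist z x < r / (2 * R)"
    using closure_approachable r R by (metis divide_pos_pos mult_pos_pos zero_less_numeral)
  obtain n0 where n0: "\<And>n. n0 \<le> n \<Longrightarrow> norm (cinner z (X n) - cinner z L) < r / 2"
    using on_D[OF z(1)] r unfolding LIMSEQ_iff by (metis half_gt_zero)
  have "norm (cinner x (X n) - cinner x L) < r" if "n0 \<le> n" for n
  proof -
    have "norm (cinner (x - z) (X n - L)) \<le> norm (x - z) * norm (X n - L)"
      by (rule cmod_cinner_le)
    also have "\<dots> \<le> r / (2 * R) * R"
      using z(2) XL[of n] r R by (intro mult_mono) (auto simp: dist_norm norm_minus_commute)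
    finally have "norm (cinner (x - z) (X n - L)) \<le> r / 2"
      using R by simp
    moreover have "cinner x (X n) - cinner x L
        = cinner (x - z) (X n - L) + (cinner z (X n) - cinner z L)"
      by (simp add: cinner_diff_left cinner_diff_right)
    then have "norm (cinner x (X n) - cinner x L)
        \<le> norm (cinner (x - z) (X n - L)) + norm (cinner z (X n) - cinner z L)"
      by (simp only: norm_triangle_ineq)
    ultimately show ?thesis
      using n0[OF that] by linarith
  qed
  then show "\<exists>n0. \<forall>n\<ge>n0. norm (cinner x (X n) - cinner x L) < r"
    by blast
qed

lemma weakly_tendsto_coefficients:
  fixes u :: "nat \<Rightarrow> 'a::complex_inner"
  assumes onb: "orthonormal_basis {1..} u" and bnd: "\<And>k. norm (X k) \<le> B"
    and coeff: "\<And>i. 1 \<le> i \<Longrightarrow> (\<lambda>k. cinner (u i) (X k)) \<longlonglongrightarrow> cinner (u i) L"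
  shows "weakly_tendsto X L"
  unfolding weakly_tendsto_def
proof
  fix x
  show "(\<lambda>k. cinner x (X k)) \<longlonglongrightarrow> cinner x L"
  proof (rule tendsto_cinner_from_dense[OF _ bnd])
    show "closure (cspan (u ` {1..})) = UNIV"
      using onb by (simp add: orthonormal_basis_def)
    fix z
    assume "z \<in> cspan (u ` {1..})"
    then obtain F c where F: "finite F" "F \<subseteq> u ` {1..}" "z = (\<Sum>v\<in>F. c v *\<^sub>C v)"
      by (rule cspanE)
    have "(\<lambda>k. \<Sum>v\<in>F. cnj (c v) * cinner v (X k)) \<longlonglongrightarrow> (\<Sum>v\<in>F. cnj (c v) * cinner v L)"
      using F(2) coeff by (intro tendsto_sum tendsto_mult_left) auto
    then show "(\<lambda>k. cinner z (X k)) \<longlonglongrightarrow> cinner z L"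
      using F(3) by (simp add: cinner_sum_left cinner_scaleC_left)
  qed
qed

lemma bounded_weakly_convergent_subseq:
  fixes X u :: "nat \<Rightarrow> 'a::complex_hilbert"
  assumes onb: "orthonormal_basis {1..} u" and bnd: "\<And>k. norm (X k) \<le> B"
  obtains s z where "strict_mono s" "weakly_tendsto (\<lambda>k. X (s k)) z"
proof -
  define c where "c k j = (if 1 \<le> j then cinner (u j) (X k) else 0)" for k j
  have B0: "0 \<le> B"
    using bnd[of 0] norm_ge_zero order_trans by blast
  have c_bound: "cmod (c k j) \<le> B" for k j
    using cmod_cinner_le[of "u j" "X k"] orthonormal_basis_norm[OF onb, of j] bnd[of k] B0
    by (auto simp: c_def)
  obtain s d where s: "strict_mono s" and cd: "\<And>j. (\<lambda>k. c (s k) j) \<longlonglongrightarrow> d j"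
    using coordinatewise_convergent_subseq[of c B, OF c_bound] by blast
  have coeff: "(\<lambda>k. cinner (u i) (X (s k))) \<longlonglongrightarrow> d i" if "1 \<le> i" for i
    using cd[of i] that by (simp add: c_def)
  have d_bound: "(\<Sum>j=1..M. (cmod (d j))\<^sup>2) \<le> B\<^sup>2" for M
  proof (rule LIMSEQ_le_const2)
    show "(\<lambda>k. \<Sum>j=1..M. (cmod (cinner (u j) (X (s k))))\<^sup>2) \<longlonglongrightarrow> (\<Sum>j=1..M. (cmod (d j))\<^sup>2)"
      by (intro tendsto_intros coeff) auto
    have "(\<Sum>j=1..M. (cmod (cinner (u j) (X (s k))))\<^sup>2) \<le> B\<^sup>2" for k
    proof -
      have "(\<Sum>j=1..M. (cmod (cinner (u j) (X (s k))))\<^sup>2) \<le> (norm (X (s k)))\<^sup>2"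
        by (rule Bessel_inequality[OF onb]) auto
      also have "\<dots> \<le> B\<^sup>2"
        using bnd[of "s k"] by (intro power_mono) auto
      finally show ?thesis .
    qed
    then show "\<exists>N. \<forall>n\<ge>N. (\<Sum>j=1..M. (cmod (cinner (u j) (X (s n))))\<^sup>2) \<le> B\<^sup>2"
      by blast
  qed
  obtain z where "\<And>i. 1 \<le> i \<Longrightarrow> cinner (u i) z = d i"
    using orthonormal_basis_Riesz_Fischer[OF onb d_bound] by blast
  then have "weakly_tendsto (\<lambda>k. X (s k)) z"
    using bnd coeff by (intro weakly_tendsto_coefficients[OF onb, of _ B]) auto
  with s show ?thesis by (rule that)
qed

lemma weakly_tendsto_bounded_clinear:
  fixes A :: "'a::complex_hilbert \<Rightarrow> 'b::complex_inner" and u :: "nat \<Rightarrow> 'a"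
  assumes onb: "orthonormal_basis {1..} u" and lin: "clinear A"
    and bnd: "\<And>x. norm (A x) \<le> C * norm x" and weak: "weakly_tendsto X L"
  shows "weakly_tendsto (\<lambda>k. A (X k)) (A L)"
  unfolding weakly_tendsto_def
proof
  fix \<eta>
  have "cmod (cinner \<eta> (A x)) \<le> (norm \<eta> * C) * norm x" for x
    using cmod_cinner_le[of \<eta> "A x"] mult_left_mono[OF bnd[of x], of "norm \<eta>"]
    by (simp add: mult.assoc)
  then obtain z where "\<And>x. cinner \<eta> (A x) = cinner z x"
    using Riesz_representation[OF onb clinear_functional_cinner_clinear[OF lin]] by blast
  then show "(\<lambda>k. cinner \<eta> (A (X k))) \<longlonglongrightarrow> cinner \<eta> (A L)"
    using weak by (simp add: weakly_tendsto_def)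
qed

lemma compact_op_weakly_tendsto_imp_tendsto:
  fixes A :: "'a::complex_hilbert \<Rightarrow> 'b::complex_inner" and u :: "nat \<Rightarrow> 'a"
  assumes A: "compact_op A" and onb: "orthonormal_basis {1..} u"
    and bnd: "\<And>k. norm (X k) \<le> B" and weak: "weakly_tendsto X L"
  shows "(\<lambda>k. A (X k)) \<longlonglongrightarrow> A L"
proof (rule LIMSEQ_subseq_subseqI)
  fix r :: "nat \<Rightarrow> nat"
  assume r: "strict_mono r"
  have lin: "clinear A" and cpt: "compact (closure (A ` cball 0 1))"
    using A by (auto simp: compact_op_def)
  obtain C where C: "\<And>x. norm (A x) \<le> C * norm x"
    using compact_op_bounded[OF A] by blast
  define R where "R = \<bar>B\<bar> + 1"
  have R: "0 < R"
    using abs_ge_zero[of B] unfolding R_def by linarith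
  have XR: "norm (X k) \<le> R" for k
    using bnd[of k] abs_ge_self[of B] unfolding R_def by linarith
  have in_K: "\<forall>k. A ((1 / R) *\<^sub>R X (r k)) \<in> closure (A ` cball 0 1)"
  proof
    fix k
    have "(1 / R) *\<^sub>R X (r k) \<in> cball 0 1"
      using R XR[of "r k"] by (simp add: divide_le_eq)
    then show "A ((1 / R) *\<^sub>R X (r k)) \<in> closure (A ` cball 0 1)"
      by (intro subsetD[OF closure_subset] imageI)
  qed
  obtain y s where s: "strict_mono s"
    and "((\<lambda>k. A ((1 / R) *\<^sub>R X (r k))) \<circ> s) \<longlonglongrightarrow> y"
    using seq_compactE[OF compact_imp_seq_compact[OF cpt] in_K] by blast
  then have y: "(\<lambda>k. A ((1 / R) *\<^sub>R X (r (s k)))) \<longlonglongrightarrow> y"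
    by (simp add: o_def)
  have strong: "(\<lambda>k. A (X (r (s k)))) \<longlonglongrightarrow> R *\<^sub>R y"
    using tendsto_scaleR[OF tendsto_const y, of R] R by (simp add: clinear_scaleR[OF lin])
  have "weakly_tendsto (\<lambda>k. X (r (s k))) L"
    using weakly_tendsto_subseq[OF weak strict_mono_o[OF r s]] by (simp add: o_def)
  then have "weakly_tendsto (\<lambda>k. A (X (r (s k)))) (A L)"
    by (rule weakly_tendsto_bounded_clinear[OF onb lin C])
  then have "R *\<^sub>R y = A L"
    by (rule weakly_tendsto_unique[OF tendsto_imp_weakly_tendsto[OF strong]])
  with strong have "(\<lambda>k. A (X (r (s k)))) \<longlonglongrightarrow> A L"
    by simp
  with s show "\<exists>s. strict_mono s \<and> (\<lambda>k. A (X (r (s k)))) \<longlonglongrightarrow> A L"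
    by blast
qed

lemma clinear_injective_weakly_null:
  fixes A :: "'a::complex_hilbert \<Rightarrow> 'b::complex_inner" and u w :: "nat \<Rightarrow> 'a"
  assumes onb: "orthonormal_basis {1..} u" and lin: "clinear A" and inj: "inj A"
    and C: "\<And>x. norm (A x) \<le> C * norm x"
    and bnd: "\<And>N. norm (w N) \<le> B" and Aw: "weakly_tendsto (\<lambda>N. A (w N)) 0"
  shows "weakly_tendsto w 0"
  unfolding weakly_tendsto_def
proof (intro allI LIMSEQ_subseq_subseqI)
  fix \<eta> and r :: "nat \<Rightarrow> nat"
  assume r: "strict_mono r"
  obtain s z where s: "strict_mono s" and z: "weakly_tendsto (\<lambda>k. w (r (s k))) z"
    using bounded_weakly_convergent_subseq[OF onb, of "\<lambda>k. w (r k)" B] bnd by blast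
  have "weakly_tendsto (\<lambda>k. A (w (r (s k)))) (A z)"
    by (rule weakly_tendsto_bounded_clinear[OF onb lin C z])
  moreover have "weakly_tendsto (\<lambda>k. A (w (r (s k)))) 0"
    using weakly_tendsto_subseq[OF Aw strict_mono_o[OF r s]] by (simp add: o_def)
  ultimately have "A z = A 0"
    unfolding clinear_zero[OF lin] by (rule weakly_tendsto_unique)
  then have "z = 0"
    by (rule injD[OF inj])
  with z have "(\<lambda>k. cinner \<eta> (w (r (s k)))) \<longlonglongrightarrow> cinner \<eta> 0"
    unfolding weakly_tendsto_def by blast
  with s show "\<exists>s. strict_mono s \<and> (\<lambda>k. cinner \<eta> (w (r (s k)))) \<longlonglongrightarrow> cinner \<eta> 0"
    by blast
qed

lemma compact_injective_weakly_null:
  fixes A :: "'a::complex_hilbert \<Rightarrow> 'b::complex_inner" and u w :: "nat \<Rightarrow> 'a"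
    and v :: "nat \<Rightarrow> 'b"
  assumes A: "compact_op A" "inj A"
    and onb: "orthonormal_basis {1..} u" and onb': "orthonormal_basis {1..} v"
    and bnd: "\<And>N. norm (w N) \<le> B"
    and coeff: "\<And>i. 1 \<le> i \<Longrightarrow> (\<lambda>N. cinner (v i) (A (w N))) \<longlonglongrightarrow> 0"
  shows "(\<lambda>N. A (w N)) \<longlonglongrightarrow> 0" and "weakly_tendsto w 0"
proof -
  have lin: "clinear A"
    using A(1) by (simp add: compact_op_def)
  obtain C where C: "0 \<le> C" "\<And>x. norm (A x) \<le> C * norm x"
    using compact_op_bounded[OF A(1)] by blast
  have "norm (A (w N)) \<le> C * B" for N
    using C(2)[of "w N"] mult_left_mono[OF bnd C(1)] by (rule order_trans)
  then have "weakly_tendsto (\<lambda>N. A (w N)) 0"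
    using coeff by (intro weakly_tendsto_coefficients[OF onb']) auto
  then show w0: "weakly_tendsto w 0"
    by (rule clinear_injective_weakly_null[OF onb lin A(2) C(2) bnd])
  \<comment> \<open>only here is compactness of \<open>A\<close> needed\<close>
  have "(\<lambda>N. A (w N)) \<longlonglongrightarrow> A 0"
    by (rule compact_op_weakly_tendsto_imp_tendsto[OF A(1) onb bnd w0])
  then show "(\<lambda>N. A (w N)) \<longlonglongrightarrow> 0"
    by (simp add: clinear_zero[OF lin])
qed

section \<open>Finite sections\<close>

lemma cmod_le_normCN:
  assumes "1 \<le> i" "i \<le> N"
  shows "cmod (x i) \<le> normCN N x"
proof -
  have "(cmod (x i))\<^sup>2 \<le> (\<Sum>j=1..N. (cmod (x j))\<^sup>2)"
    using assms by (intro member_le_sum) auto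
  then show ?thesis
    unfolding normCN_def by (rule real_le_rsqrt)
qed

lemma finite_section_residual:
  assumes "clinear A"
  shows "mat_app N (sec_mat A u v) x i - sec_vec v g i = cinner (v i) (A (synth N u x) - g)"
proof -
  have "A (synth N u x) = (\<Sum>j=1..N. x j *\<^sub>C A (u j))"
    unfolding synth_def by (simp add: clinear_sum[OF assms] clinear_scaleC[OF assms])
  then show ?thesis
    by (simp add: mat_app_def sec_vec_def sec_mat_def cinner_diff_right cinner_sum_right
        cinner_scaleC_right mult.commute)
qed

lemma finite_section_residual_coefficient_tendsto_0:
  assumes "clinear A" "1 \<le> i"
    and "(\<lambda>N. normCN N (\<lambda>i. mat_app N (sec_mat A u v) (fN N) i - sec_vec v g i)) \<longlonglongrightarrow> 0"
  shows "(\<lambda>N. cinner (v i) (A (synth N u (fN N)) - g)) \<longlonglongrightarrow> 0"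
proof (rule Lim_null_comparison[OF _ assms(3)])
  have "norm (cinner (v i) (A (synth N u (fN N)) - g))
      \<le> normCN N (\<lambda>i. mat_app N (sec_mat A u v) (fN N) i - sec_vec v g i)" if "i \<le> N" for N
    using cmod_le_normCN[OF assms(2) that] by (simp add: finite_section_residual[OF assms(1)])
  then show "eventually (\<lambda>N. norm (cinner (v i) (A (synth N u (fN N)) - g))
      \<le> normCN N (\<lambda>i. mat_app N (sec_mat A u v) (fN N) i - sec_vec v g i)) sequentially"
    unfolding eventually_sequentially by blast
qed

theorem theorem3p2:
  fixes A :: "'a::complex_hilbert \<Rightarrow> 'a"
    and f g :: 'a
    and u v :: "nat \<Rightarrow> 'a"
    and fN :: "nat \<Rightarrow> nat \<Rightarrow> complex"
  assumes "compact_op A"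
    and "inj A"
    and "A f = g"
    and "orthonormal_basis {1..} u"
    and "orthonormal_basis {1..} v"
    and "(\<lambda>N. normCN N (\<lambda>i. mat_app N (sec_mat A u v) (fN N) i - sec_vec v g i)) \<longlonglongrightarrow> 0"
    and "bdd_above (range (\<lambda>N. norm (synth N u (fN N))))"
  shows "(\<lambda>N. norm (g - A (synth N u (fN N)))) \<longlonglongrightarrow> 0 \<and>
         (\<forall>\<eta>. (\<lambda>N. cinner \<eta> (f - synth N u (fN N))) \<longlonglongrightarrow> 0)"
proof -
  define w where "w N = synth N u (fN N) - f" for N
  have lin: "clinear A"
    using assms(1) by (simp add: compact_op_def)
  have Aw: "A (w N) = A (synth N u (fN N)) - g" for N
    using assms(3) by (simp add: w_def clinear_diff[OF lin])
  obtain B0 where B0: "\<And>N. norm (synth N u (fN N)) \<le> B0"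
    using assms(7) by (auto simp: bdd_above_def)
  have B: "norm (w N) \<le> B0 + norm f" for N
    using norm_triangle_ineq4[of "synth N u (fN N)" f] B0[of N] unfolding w_def by linarith
  have "(\<lambda>N. cinner (v i) (A (w N))) \<longlonglongrightarrow> 0" if "1 \<le> i" for i
    using finite_section_residual_coefficient_tendsto_0[OF lin that assms(6)] by (simp add: Aw)
  then have Aw0: "(\<lambda>N. A (w N)) \<longlonglongrightarrow> 0" and w0: "weakly_tendsto w 0"
    using compact_injective_weakly_null[OF assms(1,2,4,5) B] by auto
  have "norm (g - A (synth N u (fN N))) = norm (A (w N))" for N
    by (simp add: Aw norm_minus_commute)
  with Aw0 have "(\<lambda>N. norm (g - A (synth N u (fN N)))) \<longlonglongrightarrow> 0"
    by (simp add: tendsto_norm_zero_iff)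
  moreover have "(\<lambda>N. cinner \<eta> (f - synth N u (fN N))) \<longlonglongrightarrow> 0" for \<eta>
  proof -
    have "(\<lambda>N. - cinner \<eta> (w N)) \<longlonglongrightarrow> - 0"
      using w0 by (intro tendsto_minus) (simp add: weakly_tendsto_def)
    then show ?thesis
      by (simp add: w_def cinner_diff_right)
  qed
  ultimately show ?thesis
    by blast
qed

end
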